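(* Let $I\times J$ be a dyadic square and let $G_{i,j}$, $1\leq i\leq m$, $1\leq j\leq n$, be nonnegative bounded measurable functions on $I\times J$. Then $$\Big[\prod_{\substack{1\leq i\leq m\\1\leq j\leq n}}G_{i,j}(x_i,y_j)\Big]_{x_1,\ldots,x_m\in I,\ y_1,\ldots,y_n\in J}\leq\prod_{\substack{1\leq i\leq m\\1\leq j\leq n}}\big[G_{i,j}^{\max\{m,n\}}\big]_{I\times J}^{1/\max\{m,n\}}.$$
   Context: $[\cdot]_{x_1,\ldots,x_m\in I,\,y_1,\ldots,y_n\in J}$ denotes the average $\frac{1}{|I|^m|J|^n}\int_{I^m\times J^n}(\cdot)$, and $[G]_{I\times J}$ denotes the average of $G$ over the square $I\times J$. *)

theory Defs
  imports "HOL-Analysis.Analysis"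
begin

definition dyadic_interval :: "int \<Rightarrow> int \<Rightarrow> real set" where
  "dyadic_interval k a = {real_of_int a * 2 powr real_of_int k ..< (real_of_int a + 1) * 2 powr real_of_int k}"

definition dyadic_square :: "real set \<Rightarrow> real set \<Rightarrow> bool" where
  "dyadic_square I J \<longleftrightarrow> (\<exists>k a b. I = dyadic_interval k a \<and> J = dyadic_interval k b)"

definition avg_sq :: "(real \<Rightarrow> real \<Rightarrow> real) \<Rightarrow> real set \<Rightarrow> real set \<Rightarrow> real" where
  "avg_sq g I J = (LINT z : I \<times> J | lborel. g (fst z) (snd z)) / (measure lborel I * measure lborel J)"

definition avg_multi :: "nat \<Rightarrow> nat \<Rightarrow> ((nat \<Rightarrow> real) \<Rightarrow> (nat \<Rightarrow> real) \<Rightarrow> real) \<Rightarrow> real set \<Rightarrow> real set \<Rightarrow> real" where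
  "avg_multi m n F I J =
     (LINT z : (PiE {1..m} (\<lambda>_. I)) \<times> (PiE {1..n} (\<lambda>_. J)) |
        (PiM {1..m} (\<lambda>_. lborel)) \<Otimes>\<^sub>M (PiM {1..n} (\<lambda>_. lborel)). F (fst z) (snd z))
     / (measure lborel I ^ m * measure lborel J ^ n)"

end

theory Submission
  imports Defs
begin

(*
  Integrating first over x_1, ..., x_m, the integrand factors over i for fixed y, and Hoelder's
  inequality for the n <= p functions t |-> G_ij(t, y_j) bounds the i-th factor by
  |I| * prod_j H_ij(y_j), where H_ij(s) is the L^p-average of G_ij(-, s) over I.  This bound
  factors over j, and Hoelder's inequality in s for the m <= p functions H_ij bounds the j-th
  factor by |J| * prod_i [H_ij^p]_J^(1/p), where [H_ij^p]_J = [G_ij^p]_(I x J) by Fubini.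
  Hoelder's inequality for fewer than p factors is weighted AM-GM with the missing weight given
  to the constant 1.
*)



lemma prod_le_mean_of_powers:
  fixes a :: "'k \<Rightarrow> real" and p :: nat
  assumes K: "finite K" and card_le: "card K \<le> p" and p: "0 < p"
    and nonneg: "\<And>k. k \<in> K \<Longrightarrow> 0 \<le> a k"
  shows "(\<Prod>k\<in>K. a k) \<le> (\<Sum>k\<in>K. a k ^ p) / p + (1 - card K / p)"
proof (cases "\<exists>k\<in>K. a k = 0")
  case True
  then have "(\<Prod>k\<in>K. a k) = 0" using K by auto
  moreover have "0 \<le> (\<Sum>k\<in>K. a k ^ p) / p" using nonneg by (auto intro!: sum_nonneg divide_nonneg_nonneg)
  moreover have "card K / p \<le> 1" using card_le p by (simp add: divide_le_eq)
  ultimately show ?thesis by linarith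
next
  case False
  then have pos: "\<And>k. k \<in> K \<Longrightarrow> 0 < a k" using nonneg by (metis less_eq_real_def)
  \<comment> \<open>Jensen for exp with the weights 1/p on each a k ^ p and the remaining weight on the point 1.\<close>
  define S where "S = insert None (Some ` K)"
  define w :: "'k option \<Rightarrow> real" where "w = case_option (1 - card K / p) (\<lambda>_. 1 / p)"
  define y :: "'k option \<Rightarrow> real" where "y = case_option 0 (\<lambda>k. p * ln (a k))"
  have sum_S: "(\<Sum>u\<in>S. h u) = h None + (\<Sum>k\<in>K. h (Some k))" for h :: "'k option \<Rightarrow> real"
    using K by (simp add: S_def sum.reindex)
  have "exp (\<Sum>u\<in>S. w u *\<^sub>R y u) \<le> (\<Sum>u\<in>S. w u * exp (y u))"
  proof (rule convex_on_sum[OF _ _ exp_convex])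
    show "(\<Sum>u\<in>S. w u) = 1" using p by (simp add: sum_S w_def)
    show "\<And>u. u \<in> S \<Longrightarrow> 0 \<le> w u" using card_le p by (auto simp: S_def w_def divide_le_eq)
  qed (use K in \<open>auto simp: S_def\<close>)
  moreover have "exp (\<Sum>u\<in>S. w u *\<^sub>R y u) = (\<Prod>k\<in>K. a k)"
    using p K pos by (simp add: sum_S w_def y_def exp_sum)
  moreover have "exp (p * ln (a k)) = a k ^ p" if "k \<in> K" for k
    using pos[OF that] by (simp add: exp_of_nat_mult)
  then have "(\<Sum>u\<in>S. w u * exp (y u)) = (\<Sum>k\<in>K. a k ^ p) / p + (1 - card K / p)"
    by (simp add: sum_S w_def y_def sum_divide_distrib)
  ultimately show ?thesis by simp
qed

lemma prod_le_scaled_mean_of_powers: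
  fixes a t :: "'k \<Rightarrow> real" and p :: nat
  assumes K: "finite K" "card K \<le> p" "0 < p"
    and a: "\<And>k. k \<in> K \<Longrightarrow> 0 \<le> a k" and t: "\<And>k. k \<in> K \<Longrightarrow> 0 < t k"
  shows "(\<Prod>k\<in>K. a k) \<le> (\<Prod>k\<in>K. t k) * ((\<Sum>k\<in>K. (a k / t k) ^ p) / p + (1 - card K / p))"
proof -
  have "(\<Prod>k\<in>K. a k) = (\<Prod>k\<in>K. t k) * (\<Prod>k\<in>K. a k / t k)"
    unfolding prod.distrib[symmetric] using t by (intro prod.cong) (auto simp: less_imp_neq[symmetric])
  also have "\<dots> \<le> (\<Prod>k\<in>K. t k) * ((\<Sum>k\<in>K. (a k / t k) ^ p) / p + (1 - card K / p))"
    using K a t by (intro mult_left_mono prod_le_mean_of_powers prod_nonneg) (auto intro: less_imp_le divide_nonneg_pos)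
  finally show ?thesis .
qed

lemma integrable_bounded_by_indicator:
  fixes h :: "'a \<Rightarrow> real"
  assumes "A \<in> sets M" "emeasure M A < \<infinity>" "h \<in> borel_measurable M"
    and "\<And>x. x \<in> space M \<Longrightarrow> \<bar>h x\<bar> \<le> C * indicator A x"
  shows "integrable M h"
proof (rule Bochner_Integration.integrable_bound)
  show "integrable M (\<lambda>x. C * indicator A x :: real)"
    using assms(1,2) by (intro integrable_mult_right integrable_real_indicator)
  show "AE x in M. norm (h x) \<le> norm (C * indicator A x :: real)"
    using assms(4) by (intro AE_I2) (smt (verit) real_norm_def)
qed fact

lemma emeasure_finite_if_measure_pos:
  assumes "0 < measure M A"
  shows "emeasure M A < \<infinity>"
  using assms measure_zero_top by (fastforce simp: less_top)

lemma integrable_prod_bounded: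
  fixes f :: "'k \<Rightarrow> 'a \<Rightarrow> real"
  assumes K: "finite K"
    and A: "A \<in> sets M" "emeasure M A < \<infinity>"
    and meas: "\<And>k. k \<in> K \<Longrightarrow> f k \<in> borel_measurable M"
    and nonneg: "\<And>k x. k \<in> K \<Longrightarrow> x \<in> space M \<Longrightarrow> 0 \<le> f k x"
    and bounded: "\<And>k x. k \<in> K \<Longrightarrow> x \<in> space M \<Longrightarrow> f k x \<le> B"
    and vanish: "\<And>x. x \<in> space M \<Longrightarrow> x \<notin> A \<Longrightarrow> \<exists>k\<in>K. f k x = 0"
  shows "integrable M (\<lambda>x. \<Prod>k\<in>K. f k x)"
proof (rule integrable_bounded_by_indicator[OF A, where C = "B ^ card K"])
  show "(\<lambda>x. \<Prod>k\<in>K. f k x) \<in> borel_measurable M" using meas by measurable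
  show "\<bar>\<Prod>k\<in>K. f k x\<bar> \<le> B ^ card K * indicator A x" if x: "x \<in> space M" for x
  proof (cases "x \<in> A")
    case True
    have "\<bar>\<Prod>k\<in>K. f k x\<bar> \<le> (\<Prod>k\<in>K. B)"
      unfolding abs_prod using nonneg[OF _ x] bounded[OF _ x] by (intro prod_mono) auto
    then show ?thesis using True by simp
  next
    case False
    then have "(\<Prod>k\<in>K. f k x) = 0"
      using K vanish[OF x] by (meson prod_zero)
    with False show ?thesis by simp
  qed
qed

lemma integrable_power_bounded:
  fixes f :: "'a \<Rightarrow> real" and p :: nat
  assumes A: "A \<in> sets M" "emeasure M A < \<infinity>" and p: "0 < p"
    and meas: "f \<in> borel_measurable M"
    and nonneg: "\<And>x. x \<in> space M \<Longrightarrow> 0 \<le> f x"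
    and bounded: "\<And>x. x \<in> space M \<Longrightarrow> f x \<le> B"
    and vanish: "\<And>x. x \<in> space M \<Longrightarrow> x \<notin> A \<Longrightarrow> f x = 0"
  shows "integrable M (\<lambda>x. f x ^ p)"
proof -
  have "integrable M (\<lambda>x. \<Prod>k\<in>{1..p}. f x)"
  proof (rule integrable_prod_bounded[OF finite_atLeastAtMost A meas nonneg bounded])
    show "\<exists>k\<in>{1..p}. f x = 0" if "x \<in> space M" "x \<notin> A" for x
      using p vanish[OF that] by auto
  qed
  then show ?thesis
    by simp
qed

lemma integral_prod_eq_0_if_integral_power_eq_0:
  fixes f :: "'k \<Rightarrow> 'a \<Rightarrow> real" and p :: nat
  assumes "finite K" "k \<in> K" "integrable M (\<lambda>x. f k x ^ p)"
    and "\<And>x. x \<in> space M \<Longrightarrow> 0 \<le> f k x" and "(\<integral>x. f k x ^ p \<partial>M) = 0"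
  shows "(\<integral>x. (\<Prod>k\<in>K. f k x) \<partial>M) = 0"
proof -
  have "AE x in M. f k x ^ p = 0"
    using integral_nonneg_eq_0_iff_AE[OF assms(3)] assms(4,5) by auto
  then have "AE x in M. (\<Prod>k\<in>K. f k x) = 0"
    by eventually_elim (use assms(1,2) in auto)
  then show ?thesis
    by (rule integral_eq_zero_AE)
qed

lemma integral_prod_le_Holder:
  fixes f :: "'k \<Rightarrow> 'a \<Rightarrow> real" and p :: nat
  assumes K: "finite K" "K \<noteq> {}" "card K \<le> p"
    and A: "A \<in> sets M" "0 < measure M A"
    and meas: "\<And>k. k \<in> K \<Longrightarrow> f k \<in> borel_measurable M"
    and nonneg: "\<And>k x. k \<in> K \<Longrightarrow> x \<in> space M \<Longrightarrow> 0 \<le> f k x"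
    and bounded: "\<And>k x. k \<in> K \<Longrightarrow> x \<in> space M \<Longrightarrow> f k x \<le> B"
    and vanish: "\<And>k x. k \<in> K \<Longrightarrow> x \<in> space M \<Longrightarrow> x \<notin> A \<Longrightarrow> f k x = 0"
  shows "(\<integral>x. (\<Prod>k\<in>K. f k x) \<partial>M)
     \<le> measure M A * (\<Prod>k\<in>K. ((\<integral>x. f k x ^ p \<partial>M) / measure M A) powr (1 / p))"
proof -
  define \<mu> where "\<mu> = measure M A"
  define c where "c k = (\<integral>x. f k x ^ p \<partial>M) / \<mu>" for k
  have p: "0 < p" using K by (meson card_gt_0_iff leD neqE order_less_le_trans)
  have A_fin: "emeasure M A < \<infinity>" using A(2) by (rule emeasure_finite_if_measure_pos)
  have prod_vanish: "(\<Prod>k\<in>K. f k x) = 0" if "x \<in> space M" "x \<notin> A" for x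
    using K(1,2) vanish[OF _ that] by (meson ex_in_conv prod_zero)
  have int_power: "integrable M (\<lambda>x. f k x ^ p)" if "k \<in> K" for k
    using that by (intro integrable_power_bounded[OF A(1) A_fin p meas nonneg bounded vanish])
  have int_prod: "integrable M (\<lambda>x. \<Prod>k\<in>K. f k x)"
  proof (rule integrable_prod_bounded[OF K(1) A(1) A_fin meas nonneg bounded])
    show "\<exists>k\<in>K. f k x = 0" if "x \<in> space M" "x \<notin> A" for x
      using K(2) vanish[OF _ that] by blast
  qed
  have c_nonneg: "0 \<le> c k" if "k \<in> K" for k
    unfolding c_def \<mu>_def using nonneg that by (auto intro!: divide_nonneg_nonneg integral_nonneg)
  show ?thesis
  proof (cases "\<exists>k\<in>K. c k = 0")
    case True
    then obtain k where k: "k \<in> K" "(\<integral>x. f k x ^ p \<partial>M) = 0"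
      using A(2) by (auto simp: c_def \<mu>_def)
    then have "(\<integral>x. (\<Prod>k\<in>K. f k x) \<partial>M) = 0"
      using K(1) int_power nonneg by (intro integral_prod_eq_0_if_integral_power_eq_0) auto
    then show ?thesis by (simp add: prod_nonneg)
  next
    case False
    then have c_pos: "0 < c k" if "k \<in> K" for k
      using c_nonneg[OF that] that by fastforce
    \<comment> \<open>Normalise each f k by its L^p-average t k and apply AM-GM pointwise.\<close>
    define t where "t k = c k powr (1 / p)" for k
    define T where "T = (\<Prod>k\<in>K. t k)"
    have t_pos: "0 < t k" if "k \<in> K" for k using c_pos[OF that] by (simp add: t_def)
    have t_power: "t k ^ p = c k" if "k \<in> K" for k
      using c_pos[OF that] p by (simp add: t_def powr_realpow[symmetric] powr_powr)
    define R where "R x = (\<Sum>k\<in>K. f k x ^ p / c k) / p + (1 - card K / p) * indicator A x" for x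
    have pointwise: "(\<Prod>k\<in>K. f k x) \<le> T * R x" if x: "x \<in> space M" for x
    proof (cases "x \<in> A")
      case False
      then show ?thesis
        using prod_vanish[OF x] vanish[OF _ x] p by (simp add: R_def zero_power)
    next
      case True
      have "(\<Prod>k\<in>K. f k x) \<le> T * ((\<Sum>k\<in>K. (f k x / t k) ^ p) / p + (1 - card K / p))"
        unfolding T_def using K p nonneg[OF _ x] t_pos by (intro prod_le_scaled_mean_of_powers) auto
      also have "\<dots> = T * R x"
        using True t_power by (simp add: R_def power_divide)
      finally show ?thesis .
    qed
    have int_R: "integrable M R"
      unfolding R_def using int_power A(1) A_fin by (auto intro!: integrable_sum)
    have "integral\<^sup>L M R = (\<Sum>k\<in>K. (\<integral>x. f k x ^ p \<partial>M) / c k) / p + (1 - card K / p) * \<mu>"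
      unfolding R_def using int_power A(1) A_fin by (simp add: integral_sum integrable_sum \<mu>_def)
    also have "(\<Sum>k\<in>K. (\<integral>x. f k x ^ p \<partial>M) / c k) = (\<Sum>k\<in>K. \<mu>)"
      using c_pos A(2) by (intro sum.cong) (force simp: c_def \<mu>_def)+
    finally have "integral\<^sup>L M R = \<mu>" using p by (simp add: field_simps)
    have "(\<integral>x. (\<Prod>k\<in>K. f k x) \<partial>M) \<le> (\<integral>x. T * R x \<partial>M)"
      using int_prod int_R pointwise by (intro integral_mono) auto
    also have "\<dots> = T * \<mu>" using \<open>integral\<^sup>L M R = \<mu>\<close> by simp
    finally show ?thesis by (simp add: T_def t_def c_def \<mu>_def mult.commute)
  qed
qed

interpretation lborel_product: product_sigma_finite "\<lambda>_::nat. lborel :: real measure"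
  by standard

lemma pair_sigma_finite_PiM_lborel:
  "finite S \<Longrightarrow> finite T \<Longrightarrow>
    pair_sigma_finite (PiM S (\<lambda>_::nat. lborel :: real measure)) (PiM T (\<lambda>_::nat. lborel :: real measure))"
  unfolding pair_sigma_finite_def by (simp add: lborel_product.sigma_finite)

lemma emeasure_PiM_lborel_box:
  fixes I J :: "real set"
  assumes "finite S" "finite T" "I \<in> sets lborel" "J \<in> sets lborel"
  shows "emeasure (PiM S (\<lambda>_::nat. lborel) \<Otimes>\<^sub>M PiM T (\<lambda>_::nat. lborel)) (PiE S (\<lambda>_. I) \<times> PiE T (\<lambda>_. J))
    = emeasure lborel I ^ card S * emeasure lborel J ^ card T"
proof -
  interpret pair_sigma_finite "PiM S (\<lambda>_::nat. lborel :: real measure)" "PiM T (\<lambda>_::nat. lborel :: real measure)"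
    using assms(1,2) by (rule pair_sigma_finite_PiM_lborel)
  show ?thesis
    using assms by (simp add: M2.emeasure_pair_measure_Times sets_PiM_I_finite lborel_product.emeasure_PiM)
qed

(* The kernels G_ij extended by zero outside I x J; the exponent p need only dominate m and n. *)
locale bounded_kernels =
  fixes m n p :: nat and I J :: "real set" and g :: "nat \<Rightarrow> nat \<Rightarrow> real \<Rightarrow> real \<Rightarrow> real" and B :: real
  assumes sizes: "0 < m" "0 < n" "m \<le> p" "n \<le> p"
    and I: "I \<in> sets lborel" "0 < measure lborel I"
    and J: "J \<in> sets lborel" "0 < measure lborel J"
    and measurable [measurable]: "\<And>i j. (\<lambda>(x, y). g i j x y) \<in> borel_measurable (lborel \<Otimes>\<^sub>M lborel)"
    and nonneg: "\<And>i j x y. 0 \<le> g i j x y"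
    and bounded: "\<And>i j x y. g i j x y \<le> B"
    and vanish: "\<And>i j x y. x \<notin> I \<or> y \<notin> J \<Longrightarrow> g i j x y = 0"
begin

lemma p_pos: "0 < p"
  using sizes by linarith

lemma B_nonneg: "0 \<le> B"
  using nonneg bounded order_trans by blast

lemma I_finite: "emeasure lborel I < \<infinity>"
  by (rule emeasure_finite_if_measure_pos[OF I(2)])

lemma J_finite: "emeasure lborel J < \<infinity>"
  by (rule emeasure_finite_if_measure_pos[OF J(2)])

lemma power_le_indicator: "\<bar>g i j x y ^ p\<bar> \<le> B ^ p * indicator I x"
  using nonneg[of i j x y] bounded[of i j x y] vanish[of x y i j] p_pos
  by (cases "x \<in> I") (auto intro: power_mono simp: zero_power)

lemma integrable_power_fst: "integrable lborel (\<lambda>x. g i j x y ^ p)"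
  by (rule integrable_bounded_by_indicator[OF I(1) I_finite _ power_le_indicator]) simp

definition row_mean :: "nat \<Rightarrow> nat \<Rightarrow> real \<Rightarrow> real" where
  "row_mean i j y = ((\<integral>x. g i j x y ^ p \<partial>lborel) / measure lborel I) powr (1 / p)"

lemma row_mean_nonneg: "0 \<le> row_mean i j y"
  by (simp add: row_mean_def)

lemma row_mean_vanish: "y \<notin> J \<Longrightarrow> row_mean i j y = 0"
  using p_pos by (simp add: row_mean_def vanish zero_power)

lemma borel_measurable_row_mean [measurable]: "row_mean i j \<in> borel_measurable lborel"
  unfolding row_mean_def by measurable

lemma row_mean_power: "row_mean i j y ^ p = (\<integral>x. g i j x y ^ p \<partial>lborel) / measure lborel I"
proof -
  have "0 \<le> (\<integral>x. g i j x y ^ p \<partial>lborel) / measure lborel I"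
    by (simp add: nonneg)
  then show ?thesis
    using p_pos by (simp add: row_mean_def root_powr_inverse[symmetric] real_root_pow_pos2)
qed

lemma row_mean_le: "row_mean i j y \<le> B"
proof -
  have "(\<integral>x. g i j x y ^ p \<partial>lborel) \<le> (\<integral>x. B ^ p * indicator I x \<partial>lborel)"
    using I(1) I_finite abs_le_D1[OF power_le_indicator[of i j _ y]]
    by (intro integral_mono integrable_power_fst integrable_mult_right integrable_real_indicator) auto
  also have "\<dots> = B ^ p * measure lborel I"
    by simp
  finally have "row_mean i j y ^ p \<le> B ^ p"
    unfolding row_mean_power by (simp only: pos_divide_le_eq[OF I(2)])
  then show ?thesis
    using power_mono_iff[OF row_mean_nonneg B_nonneg p_pos] by simp
qed

lemma integral_row_mean_power:
  "(\<integral>y. row_mean i j y ^ p \<partial>lborel) = (\<integral>z. g i j (fst z) (snd z) ^ p \<partial>lborel) / measure lborel I"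
proof -
  have box: "I \<times> J \<in> sets (lborel \<Otimes>\<^sub>M lborel)" "emeasure (lborel \<Otimes>\<^sub>M lborel) (I \<times> J) < \<infinity>"
    using I(1) J(1) I_finite J_finite
    by (simp_all add: lborel.emeasure_pair_measure_Times ennreal_mult_less_top)
  have "integrable (lborel \<Otimes>\<^sub>M lborel) (\<lambda>(x, y). g i j x y ^ p)"
  proof (rule integrable_bounded_by_indicator[OF box, where C = "B ^ p"])
    show "\<bar>(\<lambda>(x, y). g i j x y ^ p) z\<bar> \<le> B ^ p * indicator (I \<times> J) z" for z
    proof (cases z)
      case (Pair x y)
      then show ?thesis
        using power_le_indicator[of i j x y] vanish[of x y i j] p_pos
        by (cases "y \<in> J") (simp_all add: indicator_times zero_power)
    qed
  qed measurable
  then have "(\<integral>y. (\<integral>x. g i j x y ^ p \<partial>lborel) \<partial>lborel) = integral\<^sup>L (lborel \<Otimes>\<^sub>M lborel) (\<lambda>(x, y). g i j x y ^ p)"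
    by (rule lborel_pair.integral_snd)
  also have "\<dots> = (\<integral>z. g i j (fst z) (snd z) ^ p \<partial>lborel)"
    by (simp only: lborel_prod split_beta')
  finally show ?thesis
    unfolding row_mean_power by (simp only: integral_divide_zero)
qed

lemma integrable_row_product: "integrable lborel (\<lambda>x. \<Prod>j\<in>{1..n}. g i j x (y j))"
proof (rule integrable_prod_bounded[where B = B, OF finite_atLeastAtMost I(1) I_finite])
  show "\<exists>j\<in>{1..n}. g i j x (y j) = 0" if "x \<notin> I" for x
    using sizes that by (intro bexI[of _ 1] vanish) auto
qed (simp_all add: nonneg bounded measurable_Pair2')

lemma inner_integral_le:
  "(\<integral>x. (\<Prod>i\<in>{1..m}. \<Prod>j\<in>{1..n}. g i j (x i) (y j)) \<partial>PiM {1..m} (\<lambda>_. lborel))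
    \<le> measure lborel I ^ m * (\<Prod>j\<in>{1..n}. \<Prod>i\<in>{1..m}. row_mean i j (y j))"
proof -
  have row_le: "(\<integral>x. (\<Prod>j\<in>{1..n}. g i j x (y j)) \<partial>lborel)
      \<le> measure lborel I * (\<Prod>j\<in>{1..n}. row_mean i j (y j))" for i
    unfolding row_mean_def
  proof (rule integral_prod_le_Holder[where B = B, OF finite_atLeastAtMost _ _ I])
    show "{1..n} \<noteq> {}" "card {1..n} \<le> p" using sizes by auto
  qed (simp_all add: nonneg bounded vanish measurable_Pair2')
  have "(\<integral>x. (\<Prod>i\<in>{1..m}. \<Prod>j\<in>{1..n}. g i j (x i) (y j)) \<partial>PiM {1..m} (\<lambda>_. lborel))
      = (\<Prod>i\<in>{1..m}. \<integral>x. (\<Prod>j\<in>{1..n}. g i j x (y j)) \<partial>lborel)"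
    by (rule lborel_product.product_integral_prod[OF finite_atLeastAtMost integrable_row_product])
  also have "\<dots> \<le> (\<Prod>i\<in>{1..m}. measure lborel I * (\<Prod>j\<in>{1..n}. row_mean i j (y j)))"
    using row_le by (intro prod_mono) (simp add: integral_nonneg nonneg prod_nonneg)
  also have "\<dots> = measure lborel I ^ m * (\<Prod>i\<in>{1..m}. \<Prod>j\<in>{1..n}. row_mean i j (y j))"
    by (simp only: prod.distrib prod_constant card_atLeastAtMost diff_Suc_1)
  also have "\<dots> = measure lborel I ^ m * (\<Prod>j\<in>{1..n}. \<Prod>i\<in>{1..m}. row_mean i j (y j))"
    by (subst prod.swap) (rule refl)
  finally show ?thesis .
qed

lemma integrable_row_mean_product: "integrable lborel (\<lambda>y. \<Prod>i\<in>{1..m}. row_mean i j y)"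
proof (rule integrable_prod_bounded[where B = B, OF finite_atLeastAtMost J(1) J_finite])
  show "\<exists>i\<in>{1..m}. row_mean i j y = 0" if "y \<notin> J" for y
    using sizes that by (intro bexI[of _ 1] row_mean_vanish) auto
qed (simp_all add: row_mean_nonneg row_mean_le)

lemma integral_row_mean_product_le:
  "(\<integral>y. (\<Prod>i\<in>{1..m}. row_mean i j y) \<partial>lborel)
    \<le> measure lborel J * (\<Prod>i\<in>{1..m}.
         ((\<integral>z. g i j (fst z) (snd z) ^ p \<partial>lborel) / (measure lborel I * measure lborel J)) powr (1 / p))"
proof -
  have "(\<integral>y. (\<Prod>i\<in>{1..m}. row_mean i j y) \<partial>lborel)
      \<le> measure lborel J * (\<Prod>i\<in>{1..m}. ((\<integral>y. row_mean i j y ^ p \<partial>lborel) / measure lborel J) powr (1 / p))"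
  proof (rule integral_prod_le_Holder[where B = B, OF finite_atLeastAtMost _ _ J])
    show "{1..m} \<noteq> {}" "card {1..m} \<le> p" using sizes by auto
  qed (simp_all add: row_mean_nonneg row_mean_le row_mean_vanish)
  then show ?thesis
    by (simp only: integral_row_mean_power divide_divide_eq_left)
qed

lemma measurable_kernel_entry:
  "(\<lambda>z. g k l (fst z i) (snd z j)) \<in> borel_measurable (PiM S (\<lambda>_. lborel) \<Otimes>\<^sub>M PiM T (\<lambda>_. lborel))"
  if "i \<in> S" "j \<in> T"
proof -
  have "(\<lambda>z. (fst z i, snd z j)) \<in> PiM S (\<lambda>_. lborel) \<Otimes>\<^sub>M PiM T (\<lambda>_. lborel) \<rightarrow>\<^sub>M lborel \<Otimes>\<^sub>M lborel"
    using that by measurable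
  from measurable_compose[OF this measurable] show ?thesis
    by simp
qed

lemma kernel_entry_vanish_outside_box:
  assumes "z \<in> space (PiM {1..m} (\<lambda>_. lborel) \<Otimes>\<^sub>M PiM {1..n} (\<lambda>_. lborel))"
    and "z \<notin> PiE {1..m} (\<lambda>_. I) \<times> PiE {1..n} (\<lambda>_. J)"
  shows "\<exists>i\<in>{1..m}. \<exists>j\<in>{1..n}. g i j (fst z i) (snd z j) = 0"
proof -
  obtain i j where ij: "i \<in> {1..m}" "j \<in> {1..n}" "fst z i \<notin> I \<or> snd z j \<notin> J"
    using assms sizes by (force simp: space_pair_measure space_PiM PiE_iff)
  moreover have "g i j (fst z i) (snd z j) = 0"
    using ij(3) by (rule vanish)
  ultimately show ?thesis by blast
qed

lemma integrable_kernel_product: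
  "integrable (PiM {1..m} (\<lambda>_. lborel) \<Otimes>\<^sub>M PiM {1..n} (\<lambda>_. lborel))
     (\<lambda>z. \<Prod>i\<in>{1..m}. \<Prod>j\<in>{1..n}. g i j (fst z i) (snd z j))"
proof -
  let ?box = "PiE {1..m} (\<lambda>_. I) \<times> PiE {1..n} (\<lambda>_. J)"
  have box: "?box \<in> sets (PiM {1..m} (\<lambda>_. lborel) \<Otimes>\<^sub>M PiM {1..n} (\<lambda>_. lborel))"
    using I(1) J(1) by (intro pair_measureI sets_PiM_I_finite) auto
  have box_finite: "emeasure (PiM {1..m} (\<lambda>_. lborel) \<Otimes>\<^sub>M PiM {1..n} (\<lambda>_. lborel)) ?box < \<infinity>"
    unfolding emeasure_PiM_lborel_box[OF finite_atLeastAtMost finite_atLeastAtMost I(1) J(1)]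
    using I_finite J_finite by (simp add: ennreal_mult_less_top power_less_top_ennreal)
  have "integrable (PiM {1..m} (\<lambda>_. lborel) \<Otimes>\<^sub>M PiM {1..n} (\<lambda>_. lborel))
     (\<lambda>z. \<Prod>(i, j)\<in>{1..m} \<times> {1..n}. g i j (fst z i) (snd z j))"
  proof (rule integrable_prod_bounded[where B = B, OF _ box box_finite])
    show "\<exists>k\<in>{1..m} \<times> {1..n}. (case k of (i, j) \<Rightarrow> g i j (fst z i) (snd z j)) = 0"
      if "z \<in> space (PiM {1..m} (\<lambda>_. lborel) \<Otimes>\<^sub>M PiM {1..n} (\<lambda>_. lborel))" "z \<notin> ?box" for z
      using kernel_entry_vanish_outside_box[OF that] by force
  qed (auto simp: nonneg bounded measurable_kernel_entry)
  then show ?thesis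
    by (simp add: prod.cartesian_product)
qed

lemma integral_kernel_product_le:
  "(\<integral>z. (\<Prod>i\<in>{1..m}. \<Prod>j\<in>{1..n}. g i j (fst z i) (snd z j))
      \<partial>(PiM {1..m} (\<lambda>_. lborel) \<Otimes>\<^sub>M PiM {1..n} (\<lambda>_. lborel)))
    \<le> measure lborel I ^ m * measure lborel J ^ n * (\<Prod>i\<in>{1..m}. \<Prod>j\<in>{1..n}.
         ((\<integral>z. g i j (fst z) (snd z) ^ p \<partial>lborel) / (measure lborel I * measure lborel J)) powr (1 / p))"
    (is "_ \<le> _ * _ * (\<Prod>i\<in>{1..m}. \<Prod>j\<in>{1..n}. ?c i j)")
proof -
  let ?X = "PiM {1..m} (\<lambda>_::nat. lborel :: real measure)"
  let ?Y = "PiM {1..n} (\<lambda>_::nat. lborel :: real measure)"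
  interpret pair_sigma_finite ?X ?Y
    by (simp add: pair_sigma_finite_PiM_lborel)
  define F where "F x y = (\<Prod>i\<in>{1..m}. \<Prod>j\<in>{1..n}. g i j (x i) (y j))" for x y
  have int_F: "integrable (?X \<Otimes>\<^sub>M ?Y) (\<lambda>(x, y). F x y)"
    using integrable_kernel_product by (simp add: F_def split_beta')
  have int_bound: "integrable ?Y (\<lambda>y. measure lborel I ^ m * (\<Prod>j\<in>{1..n}. \<Prod>i\<in>{1..m}. row_mean i j (y j)))"
    by (intro integrable_mult_right lborel_product.product_integrable_prod[OF finite_atLeastAtMost integrable_row_mean_product])
  have "(\<integral>z. F (fst z) (snd z) \<partial>(?X \<Otimes>\<^sub>M ?Y)) = (\<integral>y. (\<integral>x. F x y \<partial>?X) \<partial>?Y)"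
    using integral_snd[OF int_F] by (simp add: split_beta')
  also have "\<dots> \<le> (\<integral>y. measure lborel I ^ m * (\<Prod>j\<in>{1..n}. \<Prod>i\<in>{1..m}. row_mean i j (y j)) \<partial>?Y)"
    using integrable_snd[OF int_F] int_bound inner_integral_le unfolding F_def by (rule integral_mono)
  also have "\<dots> = measure lborel I ^ m * (\<Prod>j\<in>{1..n}. \<integral>y. (\<Prod>i\<in>{1..m}. row_mean i j y) \<partial>lborel)"
    by (simp only: integral_mult_right_zero
        lborel_product.product_integral_prod[OF finite_atLeastAtMost integrable_row_mean_product])
  also have "\<dots> \<le> measure lborel I ^ m * (\<Prod>j\<in>{1..n}. measure lborel J * (\<Prod>i\<in>{1..m}. ?c i j))"
    using integral_row_mean_product_le
    by (intro mult_left_mono prod_mono conjI) (simp_all add: integral_nonneg prod_nonneg row_mean_nonneg)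
  also have "\<dots> = measure lborel I ^ m * measure lborel J ^ n * (\<Prod>j\<in>{1..n}. \<Prod>i\<in>{1..m}. ?c i j)"
    by (simp only: prod.distrib prod_constant card_atLeastAtMost diff_Suc_1 mult.assoc)
  also have "\<dots> = measure lborel I ^ m * measure lborel J ^ n * (\<Prod>i\<in>{1..m}. \<Prod>j\<in>{1..n}. ?c i j)"
    by (subst prod.swap) (rule refl)
  finally show ?thesis
    by (simp only: F_def)
qed

lemma avg_multi_eq_integral:
  assumes agree: "\<And>i j x y. i \<in> {1..m} \<Longrightarrow> j \<in> {1..n} \<Longrightarrow> x \<in> I \<Longrightarrow> y \<in> J \<Longrightarrow> G i j x y = g i j x y"
  shows "avg_multi m n (\<lambda>x y. \<Prod>i\<in>{1..m}. \<Prod>j\<in>{1..n}. G i j (x i) (y j)) I J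
    = (\<integral>z. (\<Prod>i\<in>{1..m}. \<Prod>j\<in>{1..n}. g i j (fst z i) (snd z j))
        \<partial>(PiM {1..m} (\<lambda>_. lborel) \<Otimes>\<^sub>M PiM {1..n} (\<lambda>_. lborel)))
      / (measure lborel I ^ m * measure lborel J ^ n)"
proof -
  let ?M = "PiM {1..m} (\<lambda>_::nat. lborel :: real measure) \<Otimes>\<^sub>M PiM {1..n} (\<lambda>_::nat. lborel :: real measure)"
  let ?box = "PiE {1..m} (\<lambda>_. I) \<times> PiE {1..n} (\<lambda>_. J)"
  have "indicator ?box z *\<^sub>R (\<Prod>i\<in>{1..m}. \<Prod>j\<in>{1..n}. G i j (fst z i) (snd z j))
      = (\<Prod>i\<in>{1..m}. \<Prod>j\<in>{1..n}. g i j (fst z i) (snd z j))" if z: "z \<in> space ?M" for z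
  proof (cases "z \<in> ?box")
    case True
    then show ?thesis by (auto simp: agree mem_Times_iff PiE_iff intro!: prod.cong)
  next
    case False
    then obtain i j where ij: "i \<in> {1..m}" "j \<in> {1..n}" "g i j (fst z i) (snd z j) = 0"
      using kernel_entry_vanish_outside_box[OF z False] by blast
    then have "(\<Prod>j\<in>{1..n}. g i j (fst z i) (snd z j)) = 0"
      by (intro prod_zero) auto
    with ij(1) have "(\<Prod>i\<in>{1..m}. \<Prod>j\<in>{1..n}. g i j (fst z i) (snd z j)) = 0"
      by (intro prod_zero) auto
    with False show ?thesis by simp
  qed
  then have "(LINT z : ?box | ?M. \<Prod>i\<in>{1..m}. \<Prod>j\<in>{1..n}. G i j (fst z i) (snd z j))
      = (\<integral>z. (\<Prod>i\<in>{1..m}. \<Prod>j\<in>{1..n}. g i j (fst z i) (snd z j)) \<partial>?M)"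
    unfolding set_lebesgue_integral_def by (rule Bochner_Integration.integral_cong[OF refl])
  then show ?thesis
    by (simp only: avg_multi_def)
qed

lemma avg_sq_power_eq_integral:
  assumes "i \<in> {1..m}" "j \<in> {1..n}"
    and agree: "\<And>x y. x \<in> I \<Longrightarrow> y \<in> J \<Longrightarrow> G i j x y = g i j x y"
  shows "avg_sq (\<lambda>x y. G i j x y ^ p) I J
    = (\<integral>z. g i j (fst z) (snd z) ^ p \<partial>lborel) / (measure lborel I * measure lborel J)"
proof -
  have "(LINT z : I \<times> J | lborel. G i j (fst z) (snd z) ^ p) = (\<integral>z. g i j (fst z) (snd z) ^ p \<partial>lborel)"
    unfolding set_lebesgue_integral_def using p_pos
    by (intro Bochner_Integration.integral_cong) (auto simp: agree vanish indicator_def mem_Times_iff zero_power)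
  then show ?thesis
    by (simp only: avg_sq_def)
qed

lemma avg_multi_le:
  assumes agree: "\<And>i j x y. i \<in> {1..m} \<Longrightarrow> j \<in> {1..n} \<Longrightarrow> x \<in> I \<Longrightarrow> y \<in> J \<Longrightarrow> G i j x y = g i j x y"
  shows "avg_multi m n (\<lambda>x y. \<Prod>i\<in>{1..m}. \<Prod>j\<in>{1..n}. G i j (x i) (y j)) I J
    \<le> (\<Prod>i\<in>{1..m}. \<Prod>j\<in>{1..n}. (avg_sq (\<lambda>x y. G i j x y ^ p) I J) powr (1 / p))"
proof -
  have "avg_multi m n (\<lambda>x y. \<Prod>i\<in>{1..m}. \<Prod>j\<in>{1..n}. G i j (x i) (y j)) I J
      = (\<integral>z. (\<Prod>i\<in>{1..m}. \<Prod>j\<in>{1..n}. g i j (fst z i) (snd z j))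
          \<partial>(PiM {1..m} (\<lambda>_. lborel) \<Otimes>\<^sub>M PiM {1..n} (\<lambda>_. lborel)))
        / (measure lborel I ^ m * measure lborel J ^ n)"
    using agree by (rule avg_multi_eq_integral)
  also have "\<dots> \<le> (\<Prod>i\<in>{1..m}. \<Prod>j\<in>{1..n}.
      ((\<integral>z. g i j (fst z) (snd z) ^ p \<partial>lborel) / (measure lborel I * measure lborel J)) powr (1 / p))"
    using integral_kernel_product_le I(2) J(2) by (simp add: pos_divide_le_eq mult.commute)
  also have "\<dots> = (\<Prod>i\<in>{1..m}. \<Prod>j\<in>{1..n}. (avg_sq (\<lambda>x y. G i j x y ^ p) I J) powr (1 / p))"
    using agree by (intro prod.cong refl) (simp add: avg_sq_power_eq_integral)
  finally show ?thesis .
qed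

end

lemma sets_lborel_dyadic_interval: "dyadic_interval k a \<in> sets lborel"
  by (simp add: dyadic_interval_def)

lemma measure_dyadic_interval: "measure lborel (dyadic_interval k a) = 2 powr k"
  by (simp add: dyadic_interval_def algebra_simps)

lemma avg_multi_const_one:
  assumes "I \<in> sets lborel" "0 < measure lborel I" "J \<in> sets lborel" "0 < measure lborel J"
  shows "avg_multi m n (\<lambda>_ _. 1) I J = 1"
proof -
  let ?M = "PiM {1..m} (\<lambda>_::nat. lborel :: real measure) \<Otimes>\<^sub>M PiM {1..n} (\<lambda>_::nat. lborel :: real measure)"
  let ?box = "PiE {1..m} (\<lambda>_. I) \<times> PiE {1..n} (\<lambda>_. J)"
  have box: "?box \<in> sets ?M"
    using assms by (intro pair_measureI sets_PiM_I_finite) auto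
  have "emeasure ?M ?box = ennreal (measure lborel I ^ m * measure lborel J ^ n)"
    using assms emeasure_finite_if_measure_pos[of lborel I] emeasure_finite_if_measure_pos[of lborel J]
    by (simp add: emeasure_PiM_lborel_box emeasure_eq_ennreal_measure ennreal_mult ennreal_power)
  then show ?thesis
    using assms set_integral_const[OF box, of "1 :: real"] by (simp add: avg_multi_def measure_def)
qed

lemma bounded_on_finite_family:
  fixes f :: "'s \<Rightarrow> 'x \<Rightarrow> real"
  assumes "finite S" and "\<And>s. s \<in> S \<Longrightarrow> \<exists>B. \<forall>x\<in>X. f s x \<le> B"
  shows "\<exists>B. \<forall>s\<in>S. \<forall>x\<in>X. f s x \<le> B"
proof -
  obtain b where b: "\<And>s x. s \<in> S \<Longrightarrow> x \<in> X \<Longrightarrow> f s x \<le> b s"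
    using assms(2) by metis
  have "b s \<le> (\<Sum>s\<in>S. \<bar>b s\<bar>)" if "s \<in> S" for s
  proof -
    have "\<bar>b s\<bar> \<le> (\<Sum>s\<in>S. \<bar>b s\<bar>)"
      using assms(1) that by (intro member_le_sum) auto
    then show ?thesis by linarith
  qed
  then show ?thesis
    using b by (meson order_trans)
qed

lemma avg_multi_prod_le_of_bounded:
  fixes m n :: nat and I J :: "real set" and G :: "nat \<Rightarrow> nat \<Rightarrow> real \<Rightarrow> real \<Rightarrow> real"
  assumes sizes: "0 < m" "0 < n"
    and I: "I \<in> sets lborel" "0 < measure lborel I"
    and J: "J \<in> sets lborel" "0 < measure lborel J"
    and meas: "\<And>i j. i \<in> {1..m} \<Longrightarrow> j \<in> {1..n} \<Longrightarrow>
                 set_borel_measurable lborel (I \<times> J) (\<lambda>z. G i j (fst z) (snd z))"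
    and nonneg: "\<And>i j x y. i \<in> {1..m} \<Longrightarrow> j \<in> {1..n} \<Longrightarrow> x \<in> I \<Longrightarrow> y \<in> J \<Longrightarrow> 0 \<le> G i j x y"
    and bounded: "\<And>i j x y. i \<in> {1..m} \<Longrightarrow> j \<in> {1..n} \<Longrightarrow> x \<in> I \<Longrightarrow> y \<in> J \<Longrightarrow> G i j x y \<le> B"
  shows "avg_multi m n (\<lambda>x y. \<Prod>i\<in>{1..m}. \<Prod>j\<in>{1..n}. G i j (x i) (y j)) I J
         \<le> (\<Prod>i\<in>{1..m}. \<Prod>j\<in>{1..n}.
               (avg_sq (\<lambda>x y. G i j x y ^ max m n) I J) powr (1 / real (max m n)))"
proof -
  define g where "g i j x y = (if i \<in> {1..m} \<and> j \<in> {1..n} \<and> x \<in> I \<and> y \<in> J then G i j x y else 0)"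
    for i j x y
  have g_measurable: "(\<lambda>(x, y). g i j x y) \<in> borel_measurable (lborel \<Otimes>\<^sub>M lborel)" for i j
  proof (cases "i \<in> {1..m} \<and> j \<in> {1..n}")
    case True
    then have "(\<lambda>(x, y). g i j x y) = (\<lambda>z. indicator (I \<times> J) z *\<^sub>R G i j (fst z) (snd z))"
      by (auto simp: g_def fun_eq_iff indicator_def)
    then show ?thesis
      using meas[of i j] True by (simp add: set_borel_measurable_def lborel_prod)
  next
    case False
    then have "(\<lambda>(x, y). g i j x y) = (\<lambda>_. 0)"
      by (auto simp: g_def fun_eq_iff)
    then show ?thesis by simp
  qed
  interpret bounded_kernels m n "max m n" I J g "max B 0"
  proof
    show "0 < m" "0 < n" "m \<le> max m n" "n \<le> max m n" using sizes by auto
  qed (use I J g_measurable nonneg bounded in \<open>auto simp: g_def le_max_iff_disj\<close>)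
  show ?thesis
    by (rule avg_multi_le) (simp add: g_def)
qed

theorem lemma2:
  fixes m n :: nat and I J :: "real set" and G :: "nat \<Rightarrow> nat \<Rightarrow> real \<Rightarrow> real \<Rightarrow> real"
  assumes "dyadic_square I J"
    and meas: "\<And>i j. i \<in> {1..m} \<Longrightarrow> j \<in> {1..n} \<Longrightarrow>
                 set_borel_measurable lborel (I \<times> J) (\<lambda>z. G i j (fst z) (snd z))"
    and nonneg: "\<And>i j x y. i \<in> {1..m} \<Longrightarrow> j \<in> {1..n} \<Longrightarrow> x \<in> I \<Longrightarrow> y \<in> J \<Longrightarrow> 0 \<le> G i j x y"
    and bdd: "\<And>i j. i \<in> {1..m} \<Longrightarrow> j \<in> {1..n} \<Longrightarrow> \<exists>B. \<forall>x\<in>I. \<forall>y\<in>J. G i j x y \<le> B"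
  shows "avg_multi m n (\<lambda>x y. \<Prod>i\<in>{1..m}. \<Prod>j\<in>{1..n}. G i j (x i) (y j)) I J
         \<le> (\<Prod>i\<in>{1..m}. \<Prod>j\<in>{1..n}.
               (avg_sq (\<lambda>x y. G i j x y ^ max m n) I J) powr (1 / real (max m n)))"
proof -
  obtain k a b where "I = dyadic_interval k a" "J = dyadic_interval k b"
    using assms(1) unfolding dyadic_square_def by blast
  then have I: "I \<in> sets lborel" "0 < measure lborel I" and J: "J \<in> sets lborel" "0 < measure lborel J"
    using sets_lborel_dyadic_interval[of k a] sets_lborel_dyadic_interval[of k b]
    by (simp_all add: measure_dyadic_interval)
  show ?thesis
  proof (cases "m = 0 \<or> n = 0")
    case True
    then show ?thesis
      using avg_multi_const_one[OF I J] by auto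
  next
    case False
    have "\<exists>B. \<forall>s\<in>{1..m} \<times> {1..n}. \<forall>z\<in>I \<times> J. G (fst s) (snd s) (fst z) (snd z) \<le> B"
      using bdd by (intro bounded_on_finite_family) auto
    then obtain B where "\<And>i j x y. i \<in> {1..m} \<Longrightarrow> j \<in> {1..n} \<Longrightarrow> x \<in> I \<Longrightarrow> y \<in> J \<Longrightarrow> G i j x y \<le> B"
      by fastforce
    with False show ?thesis
      by (intro avg_multi_prod_le_of_bounded[OF _ _ I J meas nonneg]) auto
  qed
qed

end
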